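(* Let $f=\sum_{j=0}^7f_je_j$ be a paravector-valued function on $\mathbb R^8$ whose coordinate functions have partial derivatives, identified with the octonion-valued function with the same coordinates. Then: (a) $f$ is left regular if and only if $[\partial_xfI]_0=0$ and $[\partial_xfI]_1=0$; (b) $f$ is B-regular (both left and right regular) if and only if $[\partial_xfI]_0=0$, $[\partial_xfI]_1=0$, and $[\partial_xfW]_1=0$.
   Context: $\mathrm{Cl}_{0,7}$ is the real associative Clifford algebra generated by $e_1,\dots,e_7$ with $e_ie_j+e_je_i=-2\delta_{ij}$ and $e_0=1$; $e_{i_1\cdots i_k}=e_{i_1}\cdots e_{i_k}$; $[c]_k$ is the grade-$k$ part of $c$. $\partial_xf=\sum_{i,j=0}^7e_ie_j\,\partial_{x_i}f_j$ (Clifford product), and $\partial_xfI$, $\partial_xfW$ denote Clifford products of $\partial_xf$ with $I$, $W$. $W=e_{123}+e_{145}+e_{176}+e_{246}+e_{257}+e_{347}+e_{365}$ and $I=\frac1{16}(1+We_{1234567})(1-e_{1234567})$. $\mathbb O$ is the octonion algebra with basis $1,e_1,\dots,e_7$ and product $\circ$ determined by: $e_i\circ e_i=-1$, $e_i\circ e_j=-e_j\circ e_i$ ($i\ne j$), and $e_i\circ e_j=e_k$, $e_j\circ e_k=e_i$, $e_k\circ e_i=e_j$ for each ordered triple $(i,j,k)\in\{(1,2,3),(1,4,5),(1,7,6),(2,4,6),(2,5,7),(3,4,7),(3,6,5)\}$. For octonion-valued $f$: $D_xf=\sum_{i,j=0}^7e_i\circ e_j\,\partial_{x_i}f_j$,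 $fD_x=\sum_{i,j=0}^7e_j\circ e_i\,\partial_{x_i}f_j$; left regular means $D_xf=0$, right regular means $fD_x=0$. *)

theory Defs
  imports "HOL-Analysis.Analysis"
begin

text \<open>Elements of Cl(0,7) are coefficient functions on blades; a blade is a subset
  of {1..7} (the sorted product of its generators). Only subsets of {1..7} carry
  meaningful coefficients.\<close>

type_synonym cl = "nat set \<Rightarrow> real"

definition blades :: "nat set set" where
  "blades = Pow {1..7}"

text \<open>Sign in e_A e_B = csign A B * e_(A symmetric-difference B), using e_i e_i = -1.\<close>
definition csign :: "nat set \<Rightarrow> nat set \<Rightarrow> real" where
  "csign A B = (-1) ^ (card {(a, b). a \<in> A \<and> b \<in> B \<and> b < a} + card (A \<inter> B))"

definition cmul :: "cl \<Rightarrow> cl \<Rightarrow> cl" where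
  "cmul x y = (\<lambda>C. \<Sum>A\<in>blades. \<Sum>B\<in>blades.
      (if (A - B) \<union> (B - A) = C then csign A B * x A * y B else 0))"

definition cadd :: "cl \<Rightarrow> cl \<Rightarrow> cl" where
  "cadd x y = (\<lambda>C. x C + y C)"

definition cscale :: "real \<Rightarrow> cl \<Rightarrow> cl" where
  "cscale r x = (\<lambda>C. r * x C)"

definition blade :: "nat set \<Rightarrow> cl" where
  "blade S = (\<lambda>A. if A = S then 1 else 0)"

definition cgen :: "nat \<Rightarrow> cl" where
  "cgen i = blade (if i = 0 then {} else {i})"

definition e3 :: "nat \<Rightarrow> nat \<Rightarrow> nat \<Rightarrow> cl" where
  "e3 i j k = cmul (cgen i) (cmul (cgen j) (cgen k))"

definition cW :: cl where
  "cW = (\<lambda>C. e3 1 2 3 C + e3 1 4 5 C + e3 1 7 6 C + e3 2 4 6 C + e3 2 5 7 C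
             + e3 3 4 7 C + e3 3 6 5 C)"

definition e1234567 :: cl where
  "e1234567 = cmul (cgen 1) (cmul (cgen 2) (cmul (cgen 3) (cmul (cgen 4)
                (cmul (cgen 5) (cmul (cgen 6) (cgen 7))))))"

definition cI :: cl where
  "cI = cscale (1/16) (cmul (cadd (cgen 0) (cmul cW e1234567))
                           (cadd (cgen 0) (cscale (-1) e1234567)))"

definition grade :: "nat \<Rightarrow> cl \<Rightarrow> cl" where
  "grade k c = (\<lambda>A. if card A = k then c A else 0)"

definition oct_triples :: "(nat \<times> nat \<times> nat) list" where
  "oct_triples = [(1,2,3),(1,4,5),(1,7,6),(2,4,6),(2,5,7),(3,4,7),(3,6,5)]"

definition oct_cyc :: "(nat \<times> nat \<times> nat) set" where
  "oct_cyc = (\<Union>(a,b,c)\<in>set oct_triples. {(a,b,c),(b,c,a),(c,a,b)})"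

text \<open>oprod i j k = coefficient of e_k in e_i \<circ> e_j.\<close>
definition oprod :: "nat \<Rightarrow> nat \<Rightarrow> nat \<Rightarrow> real" where
  "oprod i j k =
     (if i = 0 then (if k = j then 1 else 0)
      else if j = 0 then (if k = i then 1 else 0)
      else if i = j then (if k = 0 then -1 else 0)
      else if (i, j, k) \<in> oct_cyc then 1
      else if (j, i, k) \<in> oct_cyc then -1
      else 0)"

text \<open>Coordinates x_0..x_7 of a point x in R^8 are x $ of_nat i.\<close>
definition pd :: "nat \<Rightarrow> (real^8 \<Rightarrow> real) \<Rightarrow> real^8 \<Rightarrow> real" where
  "pd i g x = deriv (\<lambda>t. g (x + t *\<^sub>R axis (of_nat i :: 8) 1)) 0"

definition has_partials :: "(nat \<Rightarrow> real^8 \<Rightarrow> real) \<Rightarrow> bool" where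
  "has_partials f = (\<forall>i<8. \<forall>j<8. \<forall>x.
      (\<lambda>t. f j (x + t *\<^sub>R axis (of_nat i :: 8) 1)) differentiable (at 0))"

text \<open>D_x f and f D_x, as octonion coefficient vectors (index k = 0..7).\<close>
definition Dleft :: "(nat \<Rightarrow> real^8 \<Rightarrow> real) \<Rightarrow> real^8 \<Rightarrow> nat \<Rightarrow> real" where
  "Dleft f x k = (\<Sum>i<8. \<Sum>j<8. oprod i j k * pd i (f j) x)"

definition Dright :: "(nat \<Rightarrow> real^8 \<Rightarrow> real) \<Rightarrow> real^8 \<Rightarrow> nat \<Rightarrow> real" where
  "Dright f x k = (\<Sum>i<8. \<Sum>j<8. oprod j i k * pd i (f j) x)"

definition left_regular :: "(nat \<Rightarrow> real^8 \<Rightarrow> real) \<Rightarrow> bool" where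
  "left_regular f = (\<forall>x. \<forall>k<8. Dleft f x k = 0)"

definition right_regular :: "(nat \<Rightarrow> real^8 \<Rightarrow> real) \<Rightarrow> bool" where
  "right_regular f = (\<forall>x. \<forall>k<8. Dright f x k = 0)"

text \<open>Clifford Dirac operator applied to the paravector-valued f.\<close>
definition cDirac :: "(nat \<Rightarrow> real^8 \<Rightarrow> real) \<Rightarrow> real^8 \<Rightarrow> cl" where
  "cDirac f x = (\<lambda>C. \<Sum>i<8. \<Sum>j<8. pd i (f j) x * cmul (cgen i) (cgen j) C)"

end

theory Submission
  imports Defs
begin

text \<open>Identify \<open>e\<^sub>0, \<dots>, e\<^sub>7\<close> with the octonion units. The grade-0 and grade-1 parts
  of \<open>e\<^sub>i e\<^sub>j I\<close> are \<open>(e\<^sub>i \<circ> e\<^sub>j)/16\<close>, and the grade-1 part of \<open>e\<^sub>i e\<^sub>j W\<close> is the vector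
  part of \<open>(e\<^sub>j \<circ> e\<^sub>i - e\<^sub>i \<circ> e\<^sub>j)/2\<close>; these 128 identities are checked by expanding
  the products into sorted blades. By linearity \<open>[\<partial>\<^sub>x f I]\<^sub>0 + [\<partial>\<^sub>x f I]\<^sub>1 = D\<^sub>x f / 16\<close> and
  \<open>[\<partial>\<^sub>x f W]\<^sub>1\<close> is the vector part of \<open>(f D\<^sub>x - D\<^sub>x f)/2\<close>. Since the real part of
  \<open>e\<^sub>i \<circ> e\<^sub>j\<close> is symmetric in \<open>i, j\<close>, the real parts of \<open>D\<^sub>x f\<close> and \<open>f D\<^sub>x\<close> agree, so
  \<open>f D\<^sub>x = 0\<close> follows from \<open>D\<^sub>x f = 0\<close> together with the vanishing of \<open>[\<partial>\<^sub>x f W]\<^sub>1\<close>.\<close>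

lemma finite_blades: "finite blades"
  by (simp add: blades_def)

lemma cmul_vanishes_outside_blades: "\<forall>C. C \<notin> blades \<longrightarrow> cmul x y C = 0"
  unfolding cmul_def blades_def by (intro allI impI sum.neutral ballI) auto

lemma cmul_cadd_left: "cmul (cadd x y) z = cadd (cmul x z) (cmul y z)"
  unfolding cmul_def cadd_def
  by (rule ext) (simp add: sum.distrib[symmetric] if_distrib algebra_simps cong: if_cong)

lemma cmul_cadd_right: "cmul z (cadd x y) = cadd (cmul z x) (cmul z y)"
  unfolding cmul_def cadd_def
  by (rule ext) (simp add: sum.distrib[symmetric] if_distrib algebra_simps cong: if_cong)

lemma cmul_cscale_left: "cmul (cscale r x) y = cscale r (cmul x y)"
  unfolding cmul_def cscale_def
  by (rule ext) (simp add: sum_distrib_left if_distrib mult_ac cong: if_cong)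

lemma cmul_cscale_right: "cmul x (cscale r y) = cscale r (cmul x y)"
  unfolding cmul_def cscale_def
  by (rule ext) (simp add: sum_distrib_left if_distrib mult_ac cong: if_cong)

lemma cmul_zero_left: "cmul (\<lambda>_. 0) y = (\<lambda>_. 0)"
  by (rule ext) (simp add: cmul_def cong: if_cong)

lemma cmul_zero_right: "cmul x (\<lambda>_. 0) = (\<lambda>_. 0)"
  by (rule ext) (simp add: cmul_def cong: if_cong)

lemma cscale_cscale: "cscale r (cscale s x) = cscale (r * s) x"
  by (rule ext) (simp add: cscale_def)

lemma cmul_sum_left:
  "finite I \<Longrightarrow> cmul (\<lambda>C. \<Sum>i\<in>I. g i C) y = (\<lambda>C. \<Sum>i\<in>I. cmul (g i) y C)"
proof (induction I rule: finite_induct)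
  case empty
  then show ?case by (simp add: cmul_zero_left)
next
  case (insert a I)
  then have "(\<lambda>C. \<Sum>i\<in>insert a I. g i C) = cadd (g a) (\<lambda>C. \<Sum>i\<in>I. g i C)"
    by (simp add: cadd_def)
  with insert show ?case
    by (simp only: cmul_cadd_left) (simp add: cadd_def)
qed

lemma cmul_blade:
  assumes "A \<in> blades" "B \<in> blades"
  shows "cmul (blade A) (blade B) = cscale (csign A B) (blade (sym_diff A B))"
proof (rule ext)
  fix C
  define v where "v = (if sym_diff A B = C then csign A B else 0)"
  have "cmul (blade A) (blade B) C =
      (\<Sum>A'\<in>blades. \<Sum>B'\<in>blades. if A' = A \<and> B' = B then v else 0)"
    unfolding cmul_def blade_def v_def by (intro sum.cong refl) auto
  also have "\<dots> = (\<Sum>A'\<in>blades. if A' = A then v else 0)"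
    using assms finite_blades by (intro sum.cong refl) (auto simp: if_distrib)
  also have "\<dots> = v"
    using assms finite_blades by simp
  finally show "cmul (blade A) (blade B) C = cscale (csign A B) (blade (sym_diff A B)) C"
    unfolding cscale_def blade_def v_def by auto
qed

section \<open>Sparse expansions in sorted blades\<close>

lemma csign_eq_sum:
  assumes "finite A" "finite B"
  shows "csign A B = (-1) ^ (\<Sum>a\<in>A. card {b\<in>B. b < a} + (if a \<in> B then 1 else 0))"
proof -
  have "{(a, b). a \<in> A \<and> b \<in> B \<and> b < a} = Sigma A (\<lambda>a. {b\<in>B. b < a})"
    by auto
  then have "card {(a, b). a \<in> A \<and> b \<in> B \<and> b < a} = (\<Sum>a\<in>A. card {b\<in>B. b < a})"
    using assms by simp
  moreover have "card (A \<inter> B) = (\<Sum>a\<in>A. if a \<in> B then 1 else 0)"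
    using assms by (simp add: Int_def sum.If_cases)
  ultimately show ?thesis
    by (simp add: csign_def sum.distrib)
qed

fun merge_symdiff :: "nat list \<Rightarrow> nat list \<Rightarrow> nat list" where
  "merge_symdiff [] ys = ys"
| "merge_symdiff xs [] = xs"
| "merge_symdiff (x # xs) (y # ys) =
     (if x < y then x # merge_symdiff xs (y # ys)
      else if y < x then y # merge_symdiff (x # xs) ys
      else merge_symdiff xs ys)"

lemma set_merge_symdiff_subset: "set (merge_symdiff xs ys) \<subseteq> set xs \<union> set ys"
  by (induction xs ys rule: merge_symdiff.induct) auto

lemma sorted_merge_symdiff:
  "sorted_wrt (<) xs \<Longrightarrow> sorted_wrt (<) ys \<Longrightarrow> sorted_wrt (<) (merge_symdiff xs ys)"
  by (induction xs ys rule: merge_symdiff.induct)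
    (use set_merge_symdiff_subset in fastforce)+

lemma set_merge_symdiff:
  "sorted_wrt (<) xs \<Longrightarrow> sorted_wrt (<) ys \<Longrightarrow>
    set (merge_symdiff xs ys) = sym_diff (set xs) (set ys)"
  by (induction xs ys rule: merge_symdiff.induct) auto

definition swap_count :: "nat list \<Rightarrow> nat list \<Rightarrow> nat" where
  "swap_count xs ys =
     (\<Sum>a\<leftarrow>xs. length (filter (\<lambda>b. b < a) ys) + (if a \<in> set ys then 1 else 0))"

lemma csign_set_eq_swap_count:
  assumes "distinct xs" "distinct ys"
  shows "csign (set xs) (set ys) = (-1) ^ swap_count xs ys"
proof -
  have card_less: "card {b\<in>set ys. b < a} = length (filter (\<lambda>b. b < a) ys)" for a
  proof -
    have "{b\<in>set ys. b < a} = {b. b < a} \<inter> set ys"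
      by auto
    then show ?thesis
      by (simp only: distinct_length_filter[OF assms(2)])
  qed
  have "csign (set xs) (set ys) =
      (-1) ^ (\<Sum>a\<in>set xs. card {b\<in>set ys. b < a} + (if a \<in> set ys then 1 else 0))"
    by (rule csign_eq_sum) simp_all
  also have "\<dots> = (-1) ^ swap_count xs ys"
    unfolding swap_count_def sum_list_distinct_conv_sum_set[OF assms(1)] card_less ..
  finally show ?thesis .
qed

definition blade_word :: "nat list \<Rightarrow> bool" where
  "blade_word xs \<longleftrightarrow> sorted_wrt (<) xs \<and> set xs \<subseteq> {1..7}"

text \<open>A list of pairs \<open>(w, c)\<close> with blade words \<open>w\<close> represents \<open>\<Sum> c e\<^sub>w\<close>;
  \<open>terms_mul\<close> multiplies such representations in a form that simp can evaluate.\<close>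

definition cl_of_terms :: "(nat list \<times> real) list \<Rightarrow> cl" where
  "cl_of_terms L = (\<lambda>C. \<Sum>p\<leftarrow>L. if C = set (fst p) then snd p else 0)"

definition terms_mul ::
  "(nat list \<times> real) list \<Rightarrow> (nat list \<times> real) list \<Rightarrow> (nat list \<times> real) list" where
  "terms_mul L M = concat (map (\<lambda>p. map (\<lambda>q. (merge_symdiff (fst p) (fst q),
       (-1) ^ swap_count (fst p) (fst q) * snd p * snd q)) M) L)"

lemma blade_word_merge_symdiff:
  "blade_word xs \<Longrightarrow> blade_word ys \<Longrightarrow> blade_word (merge_symdiff xs ys)"
  using sorted_merge_symdiff set_merge_symdiff_subset[of xs ys] by (auto simp: blade_word_def)

lemma blade_words_terms_mul:
  "\<forall>p\<in>set L. blade_word (fst p) \<Longrightarrow> \<forall>q\<in>set M. blade_word (fst q) \<Longrightarrow>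
    \<forall>p\<in>set (terms_mul L M). blade_word (fst p)"
  by (auto simp: terms_mul_def intro: blade_word_merge_symdiff)

lemma cl_of_terms_Nil: "cl_of_terms [] = (\<lambda>_. 0)"
  by (simp add: cl_of_terms_def)

lemma cl_of_terms_Cons:
  "cl_of_terms (p # L) = cadd (cscale (snd p) (blade (set (fst p)))) (cl_of_terms L)"
  by (rule ext) (simp add: cl_of_terms_def cadd_def cscale_def blade_def)

lemma cl_of_terms_append: "cl_of_terms (L @ M) = cadd (cl_of_terms L) (cl_of_terms M)"
  by (rule ext) (simp add: cl_of_terms_def cadd_def)

lemma cscale_cl_of_terms:
  "cscale r (cl_of_terms L) = cl_of_terms (map (\<lambda>q. (fst q, r * snd q)) L)"
  unfolding cscale_def cl_of_terms_def
  by (rule ext, induction L) (simp_all add: distrib_left)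

lemma cmul_blade_cl_of_terms:
  assumes "blade_word xs" "\<forall>q\<in>set L. blade_word (fst q)"
  shows "cmul (blade (set xs)) (cl_of_terms L) =
    cl_of_terms (map (\<lambda>q. (merge_symdiff xs (fst q), (-1) ^ swap_count xs (fst q) * snd q)) L)"
  using assms(2)
proof (induction L)
  case Nil
  then show ?case by (simp add: cl_of_terms_Nil cmul_zero_right)
next
  case (Cons q L)
  then have q: "blade_word (fst q)" and L: "\<forall>q\<in>set L. blade_word (fst q)"
    by simp_all
  have "cmul (blade (set xs)) (blade (set (fst q))) =
      cscale ((-1) ^ swap_count xs (fst q)) (blade (set (merge_symdiff xs (fst q))))"
    using assms(1) q cmul_blade[of "set xs" "set (fst q)"]
      csign_set_eq_swap_count[of xs "fst q"] set_merge_symdiff[of xs "fst q"]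
    by (simp add: blade_word_def blades_def strict_sorted_iff)
  with Cons.IH[OF L] show ?case
    by (simp add: cl_of_terms_Cons cmul_cadd_right cmul_cscale_right cscale_cscale mult.commute)
qed

lemma cmul_cl_of_terms:
  assumes "\<forall>p\<in>set L. blade_word (fst p)" "\<forall>q\<in>set M. blade_word (fst q)"
  shows "cmul (cl_of_terms L) (cl_of_terms M) = cl_of_terms (terms_mul L M)"
  using assms(1)
proof (induction L)
  case Nil
  then show ?case by (simp add: cl_of_terms_Nil cmul_zero_left terms_mul_def)
next
  case (Cons p L)
  then have p: "blade_word (fst p)" and L: "\<forall>p\<in>set L. blade_word (fst p)"
    by simp_all
  have "terms_mul (p # L) M = map (\<lambda>q. (merge_symdiff (fst p) (fst q),
      (-1) ^ swap_count (fst p) (fst q) * snd p * snd q)) M @ terms_mul L M"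
    by (simp add: terms_mul_def)
  with Cons.IH[OF L] cmul_blade_cl_of_terms[OF p assms(2)] show ?case
    by (simp add: cl_of_terms_Cons cl_of_terms_append cmul_cadd_left cmul_cscale_left
        cscale_cl_of_terms o_def mult_ac)
qed

definition terms_coeff :: "nat list \<Rightarrow> (nat list \<times> real) list \<Rightarrow> real" where
  "terms_coeff w L = (\<Sum>p\<leftarrow>L. if w = fst p then snd p else 0)"

lemma cl_of_terms_at_blade_word:
  assumes "\<forall>p\<in>set L. blade_word (fst p)" "sorted_wrt (<) ys"
  shows "cl_of_terms L (set ys) = terms_coeff ys L"
  unfolding cl_of_terms_def terms_coeff_def using assms
  by (intro arg_cong[where f=sum_list] map_cong refl)
    (auto simp: blade_word_def dest: strict_sorted_equal)

definition gen_word :: "nat \<Rightarrow> nat list" where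
  "gen_word i = (if i = 0 then [] else [i])"

lemma gen_word_0: "gen_word 0 = []"
  and gen_word_Suc_0: "gen_word (Suc 0) = [1]"
  and gen_word_numeral: "gen_word (numeral n) = [numeral n]"
  by (simp_all add: gen_word_def)

lemma cgen_eq_cl_of_terms: "cgen i = cl_of_terms [(gen_word i, 1)]"
  by (rule ext) (simp add: cgen_def blade_def cl_of_terms_def gen_word_def)

lemma sorted_gen_word: "sorted_wrt (<) (gen_word i)"
  by (simp add: gen_word_def)

lemma blade_word_gen_word: "i < 8 \<Longrightarrow> blade_word (gen_word i)"
  by (auto simp: blade_word_def gen_word_def)

section \<open>Products of generators with I and W\<close>

definition pseudoscalar_terms :: "(nat list \<times> real) list" where
  "pseudoscalar_terms = [([1, 2, 3, 4, 5, 6, 7], 1)]"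

definition W_terms :: "(nat list \<times> real) list" where
  "W_terms = [([1, 2, 3], 1), ([1, 4, 5], 1), ([1, 6, 7], -1), ([2, 4, 6], 1), ([2, 5, 7], 1),
    ([3, 4, 7], 1), ([3, 5, 6], -1)]"

definition I_terms :: "(nat list \<times> real) list" where
  "I_terms = [([], 1/16), ([1, 2, 3, 4, 5, 6, 7], -1/16),
    ([4, 5, 6, 7], 1/16), ([1, 2, 3], -1/16), ([2, 3, 6, 7], 1/16), ([1, 4, 5], -1/16),
    ([2, 3, 4, 5], -1/16), ([1, 6, 7], 1/16), ([1, 3, 5, 7], 1/16), ([2, 4, 6], -1/16),
    ([1, 3, 4, 6], 1/16), ([2, 5, 7], -1/16), ([1, 2, 5, 6], 1/16), ([3, 4, 7], -1/16),
    ([1, 2, 4, 7], -1/16), ([3, 5, 6], 1/16)]"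

lemmas terms_eval_simps = terms_mul_def swap_count_def blade_word_def

lemma e1234567_eq: "e1234567 = cl_of_terms pseudoscalar_terms"
  unfolding e1234567_def cgen_eq_cl_of_terms
  by (simp add: cmul_cl_of_terms blade_words_terms_mul terms_eval_simps gen_word_def
      pseudoscalar_terms_def)

lemma cW_eq: "cW = cl_of_terms W_terms"
  unfolding cW_def e3_def cgen_eq_cl_of_terms
  by (simp add: cmul_cl_of_terms blade_words_terms_mul terms_eval_simps gen_word_def)
    (simp add: W_terms_def cl_of_terms_def add.assoc)

lemma cI_eq: "cI = cl_of_terms I_terms"
  unfolding cI_def e1234567_eq cW_eq cgen_eq_cl_of_terms
  by (simp add: cmul_cl_of_terms blade_words_terms_mul terms_eval_simps gen_word_def
      cl_of_terms_append[symmetric]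
      cscale_cl_of_terms pseudoscalar_terms_def W_terms_def I_terms_def)

lemma blade_words_W_terms: "\<forall>p\<in>set W_terms. blade_word (fst p)"
  by (simp add: W_terms_def blade_word_def)

lemma blade_words_I_terms: "\<forall>p\<in>set I_terms. blade_word (fst p)"
  by (simp add: I_terms_def blade_word_def)

lemma less_8_iff:
  "i < (8::nat) \<longleftrightarrow> i = 0 \<or> i = 1 \<or> i = 2 \<or> i = 3 \<or> i = 4 \<or> i = 5 \<or> i = 6 \<or> i = 7"
  by arith

lemma all_less_8_iff:
  "(\<forall>i<8::nat. P i) \<longleftrightarrow> P 0 \<and> P 1 \<and> P 2 \<and> P 3 \<and> P 4 \<and> P 5 \<and> P 6 \<and> P 7"
  unfolding less_8_iff by blast

lemma all_less_8_split: "(\<forall>k<8::nat. P k) \<longleftrightarrow> P 0 \<and> (\<forall>k\<in>{1..7}. P k)"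
proof -
  have "{1..7} = {k. k < 8 \<and> k \<noteq> (0::nat)}"
    by auto
  then show ?thesis
    by (metis (mono_tags, lifting) mem_Collect_eq zero_less_numeral)
qed

lemma oct_cyc_eq: "oct_cyc = {(1,2,3), (2,3,1), (3,1,2), (1,4,5), (4,5,1), (5,1,4),
    (1,7,6), (7,6,1), (6,1,7), (2,4,6), (4,6,2), (6,2,4), (2,5,7), (5,7,2), (7,2,5),
    (3,4,7), (4,7,3), (7,3,4), (3,6,5), (6,5,3), (5,3,6)}"
  by (auto simp: oct_cyc_def oct_triples_def)

text \<open>Splitting on \<open>i\<close> and \<open>j\<close> before simp lets each product \<open>e\<^sub>i e\<^sub>j I\<close> be expanded
  once, with concrete indices.\<close>

lemma terms_coeff_gen_gen_I:
  assumes "i < 8" "j < 8"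
  shows "\<forall>k<8. terms_coeff (gen_word k)
    (terms_mul (terms_mul [(gen_word i, 1)] [(gen_word j, 1)]) I_terms) = oprod i j k / 16"
  using assms unfolding less_8_iff
  by (elim disjE) (simp_all add: all_less_8_iff terms_coeff_def terms_eval_simps gen_word_0
      gen_word_Suc_0 gen_word_numeral I_terms_def oprod_def oct_cyc_eq)

lemma terms_coeff_gen_gen_W:
  assumes "i < 8" "j < 8"
  shows "\<forall>k<8. terms_coeff (gen_word k)
    (terms_mul (terms_mul [(gen_word i, 1)] [(gen_word j, 1)]) W_terms)
      = (oprod j i k - oprod i j k) / 2"
  using assms unfolding less_8_iff
  by (elim disjE) (simp_all add: all_less_8_iff terms_coeff_def terms_eval_simps gen_word_0
      gen_word_Suc_0 gen_word_numeral W_terms_def oprod_def oct_cyc_eq)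

lemma cmul_gen_gen_at_gen_word:
  assumes "i < 8" "j < 8" "\<forall>p\<in>set L. blade_word (fst p)"
  shows "cmul (cmul (cgen i) (cgen j)) (cl_of_terms L) (set (gen_word k)) =
    terms_coeff (gen_word k) (terms_mul (terms_mul [(gen_word i, 1)] [(gen_word j, 1)]) L)"
proof -
  have ij: "\<forall>p\<in>set (terms_mul [(gen_word i, 1)] [(gen_word j, 1)]). blade_word (fst p)"
    by (rule blade_words_terms_mul) (simp_all add: assms blade_word_gen_word)
  show ?thesis
    using assms blade_words_terms_mul[OF ij assms(3)]
    by (simp add: cgen_eq_cl_of_terms cmul_cl_of_terms ij blade_word_gen_word
        cl_of_terms_at_blade_word sorted_gen_word)
qed

lemma cmul_gen_gen_cI_at_gen_word:
  "i < 8 \<Longrightarrow> j < 8 \<Longrightarrow> k < 8 \<Longrightarrow>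
    cmul (cmul (cgen i) (cgen j)) cI (set (gen_word k)) = oprod i j k / 16"
  by (simp add: cI_eq cmul_gen_gen_at_gen_word blade_words_I_terms terms_coeff_gen_gen_I)

lemma cmul_gen_gen_cW_at_gen_word:
  "i < 8 \<Longrightarrow> j < 8 \<Longrightarrow> k < 8 \<Longrightarrow>
    cmul (cmul (cgen i) (cgen j)) cW (set (gen_word k)) = (oprod j i k - oprod i j k) / 2"
  by (simp add: cW_eq cmul_gen_gen_at_gen_word blade_words_W_terms terms_coeff_gen_gen_W)

section \<open>The Dirac operator\<close>

lemma cmul_cDirac:
  "cmul (cDirac f x) y C = (\<Sum>i<8. \<Sum>j<8. pd i (f j) x * cmul (cmul (cgen i) (cgen j)) y C)"
proof -
  have "cmul (\<lambda>C. pd i (f j) x * cmul (cgen i) (cgen j) C) y =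
      cscale (pd i (f j) x) (cmul (cmul (cgen i) (cgen j)) y)" for i j
    using cmul_cscale_left unfolding cscale_def by blast
  then show ?thesis
    unfolding cDirac_def by (simp add: cmul_sum_left cscale_def)
qed

lemma cmul_cDirac_cI_at_gen_word:
  "k < 8 \<Longrightarrow> cmul (cDirac f x) cI (set (gen_word k)) = Dleft f x k / 16"
  by (simp add: cmul_cDirac Dleft_def cmul_gen_gen_cI_at_gen_word sum_divide_distrib mult.commute)

lemma cmul_cDirac_cW_at_gen_word:
  "k < 8 \<Longrightarrow> cmul (cDirac f x) cW (set (gen_word k)) = (Dright f x k - Dleft f x k) / 2"
  by (simp add: cmul_cDirac Dleft_def Dright_def cmul_gen_gen_cW_at_gen_word sum_divide_distrib
      sum_subtractf[symmetric] algebra_simps)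

lemma Dright_0_eq_Dleft_0: "Dright f x 0 = Dleft f x 0"
proof -
  have "oprod j i 0 = oprod i j 0" for i j
    by (auto simp: oprod_def oct_cyc_eq)
  then show ?thesis
    by (simp add: Dleft_def Dright_def)
qed

lemma grade_0_eq_0_iff:
  assumes "\<forall>C. C \<notin> blades \<longrightarrow> c C = 0"
  shows "grade 0 c = (\<lambda>_. 0) \<longleftrightarrow> c {} = 0"
proof
  show "grade 0 c = (\<lambda>_. 0) \<Longrightarrow> c {} = 0"
    by (metis grade_def card.empty)
  show "grade 0 c = (\<lambda>_. 0)" if "c {} = 0"
  proof
    fix A
    have "A \<noteq> {} \<Longrightarrow> card A = 0 \<Longrightarrow> A \<notin> blades"
      by (auto simp: blades_def dest: finite_subset)
    then show "grade 0 c A = 0"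
      using that assms by (auto simp: grade_def)
  qed
qed

lemma grade_1_eq_0_iff:
  assumes "\<forall>C. C \<notin> blades \<longrightarrow> c C = 0"
  shows "grade 1 c = (\<lambda>_. 0) \<longleftrightarrow> (\<forall>k\<in>{1..7}. c {k} = 0)"
proof
  show "grade 1 c = (\<lambda>_. 0) \<Longrightarrow> \<forall>k\<in>{1..7}. c {k} = 0"
    by (metis grade_def is_singletonI is_singleton_altdef)
  show "grade 1 c = (\<lambda>_. 0)" if "\<forall>k\<in>{1..7}. c {k} = 0"
  proof
    fix A
    show "grade 1 c A = 0"
    proof (cases "card A = 1")
      case True
      then obtain k where "A = {k}"
        by (auto simp: card_Suc_eq)
      then show ?thesis
        using that assms by (cases "k \<in> {1..7}") (auto simp: grade_def blades_def)
    qed (simp add: grade_def)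
  qed
qed

lemma grades_01_cDirac_cI_eq_0_iff:
  "grade 0 (cmul (cDirac f x) cI) = (\<lambda>_. 0) \<and> grade 1 (cmul (cDirac f x) cI) = (\<lambda>_. 0)
    \<longleftrightarrow> (\<forall>k<8. Dleft f x k = 0)"
proof -
  have e0: "cmul (cDirac f x) cI {} = Dleft f x 0 / 16"
    using cmul_cDirac_cI_at_gen_word[of 0 f x] by (simp add: gen_word_def)
  have ek: "cmul (cDirac f x) cI {k} = Dleft f x k / 16" if "k \<in> {1..7}" for k
    using that cmul_cDirac_cI_at_gen_word[of k f x] by (simp add: gen_word_def)
  show ?thesis
    unfolding grade_0_eq_0_iff[OF cmul_vanishes_outside_blades] grade_1_eq_0_iff[OF cmul_vanishes_outside_blades]
      all_less_8_split
    by (simp add: e0 ek)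
qed

lemma grade_1_cDirac_cW_eq_0_iff:
  "grade 1 (cmul (cDirac f x) cW) = (\<lambda>_. 0) \<longleftrightarrow> (\<forall>k\<in>{1..7}. Dright f x k = Dleft f x k)"
proof -
  have ek: "cmul (cDirac f x) cW {k} = (Dright f x k - Dleft f x k) / 2" if "k \<in> {1..7}" for k
    using that cmul_cDirac_cW_at_gen_word[of k f x] by (simp add: gen_word_def)
  show ?thesis
    unfolding grade_1_eq_0_iff[OF cmul_vanishes_outside_blades] by (simp add: ek)
qed

theorem theorem5p2:
  fixes f :: "nat \<Rightarrow> real^8 \<Rightarrow> real"
  assumes "has_partials f"
  shows "(left_regular f \<longleftrightarrow>
            (\<forall>x. grade 0 (cmul (cDirac f x) cI) = (\<lambda>_. 0) \<and>
                 grade 1 (cmul (cDirac f x) cI) = (\<lambda>_. 0)))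
       \<and> ((left_regular f \<and> right_regular f) \<longleftrightarrow>
            (\<forall>x. grade 0 (cmul (cDirac f x) cI) = (\<lambda>_. 0) \<and>
                 grade 1 (cmul (cDirac f x) cI) = (\<lambda>_. 0) \<and>
                 grade 1 (cmul (cDirac f x) cW) = (\<lambda>_. 0)))"
proof -
  have "(\<forall>k<8. Dright f x k = 0) \<longleftrightarrow> (\<forall>k\<in>{1..7}. Dright f x k = Dleft f x k)"
    if "\<forall>k<8. Dleft f x k = 0" for x
    using that Dright_0_eq_Dleft_0[of f x] unfolding all_less_8_split by auto
  then show ?thesis
    unfolding left_regular_def right_regular_def grade_1_cDirac_cW_eq_0_iff conj_assoc[symmetric]
      grades_01_cDirac_cI_eq_0_iff
    by blast
qed

end
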